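(* Let $\Delta$ be a local derivation of $\mathcal{S}$ with $\Delta(G_0)=0$, and let $m\in\mathbb{Z}\setminus\{0\}$. Then $\Delta(G_m)$ lies in the span of $\{G_{km}:k\in\mathbb{Z}\}$; that is, in the basis expansion of $\Delta(G_m)$ all coefficients of the $L_k$ vanish, and only $G_n$ with $n$ divisible by $m$ occur.
   Context: $\mathcal{S}$ is the centerless super Virasoro algebra: the Lie superalgebra over $\mathbb{C}$ with basis $\{L_m,G_n: m,n\in\mathbb{Z}\}$, $L_m$ even, $G_n$ odd, and brackets $[L_m,L_n]=(m-n)L_{m+n}$, $[L_m,G_r]=(\frac m2-r)G_{m+r}$, $[G_r,G_s]=2L_{r+s}$. A homogeneous linear map $D$ of parity $|D|$ is a derivation if $D([x,y])=[D(x),y]+(-1)^{|D||x|}[x,D(y)]$ for homogeneous $x,y$; derivations are sums of even and odd ones. A linear map $\Delta:\mathcal{S}\to\mathcal{S}$ is a local derivation if for every $x$ there is a derivation $D_x$ with $\Delta(x)=D_x(x)$. *)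

theory Defs
  imports Complex_Main
begin

text \<open>Elements of the centerless super Virasoro algebra S are represented by
  pairs (a, b) of coefficient functions: x = sum_m a m L_m + sum_n b n G_n,
  with a and b finitely supported.\<close>

type_synonym sv = "(int \<Rightarrow> complex) \<times> (int \<Rightarrow> complex)"

definition SV :: "sv set" where
  "SV = {(a, b). finite {m. a m \<noteq> 0} \<and> finite {n. b n \<noteq> 0}}"

definition sv_zero :: sv where
  "sv_zero = ((\<lambda>_. 0), (\<lambda>_. 0))"

definition sv_add :: "sv \<Rightarrow> sv \<Rightarrow> sv" where
  "sv_add x y = ((\<lambda>k. fst x k + fst y k), (\<lambda>k. snd x k + snd y k))"

definition sv_smul :: "complex \<Rightarrow> sv \<Rightarrow> sv" where
  "sv_smul c x = ((\<lambda>k. c * fst x k), (\<lambda>k. c * snd x k))"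

definition delta :: "int \<Rightarrow> int \<Rightarrow> complex" where
  "delta n = (\<lambda>k. if k = n then 1 else 0)"

definition Lb :: "int \<Rightarrow> sv" where "Lb m = (delta m, (\<lambda>_. 0))"
definition Gb :: "int \<Rightarrow> sv" where "Gb n = ((\<lambda>_. 0), delta n)"

text \<open>Bilinear extension of
  [L_m,L_n] = (m-n)L_{m+n}, [L_m,G_r] = (m/2-r)G_{m+r},
  [G_r,L_m] = -(m/2-r)G_{m+r}, [G_r,G_s] = 2L_{r+s}.\<close>
definition sv_br :: "sv \<Rightarrow> sv \<Rightarrow> sv" where
  "sv_br x y =
    ((\<lambda>k. (\<Sum>m\<in>{m. fst x m \<noteq> 0}. fst x m * fst y (k - m) * of_int (m - (k - m)))
        + (\<Sum>r\<in>{r. snd x r \<noteq> 0}. snd x r * snd y (k - r) * 2)),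
     (\<lambda>k. (\<Sum>m\<in>{m. fst x m \<noteq> 0}. fst x m * snd y (k - m) * (of_int m / 2 - of_int (k - m)))
        - (\<Sum>r\<in>{r. snd x r \<noteq> 0}. snd x r * fst y (k - r) * (of_int (k - r) / 2 - of_int r))))"

definition sv_even :: "sv \<Rightarrow> bool" where "sv_even x \<longleftrightarrow> x \<in> SV \<and> snd x = (\<lambda>_. 0)"
definition sv_odd :: "sv \<Rightarrow> bool" where "sv_odd x \<longleftrightarrow> x \<in> SV \<and> fst x = (\<lambda>_. 0)"

definition sv_linear :: "(sv \<Rightarrow> sv) \<Rightarrow> bool" where
  "sv_linear D \<longleftrightarrow> (\<forall>x\<in>SV. D x \<in> SV)
     \<and> (\<forall>x\<in>SV. \<forall>y\<in>SV. D (sv_add x y) = sv_add (D x) (D y))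
     \<and> (\<forall>c. \<forall>x\<in>SV. D (sv_smul c x) = sv_smul c (D x))"

definition even_der :: "(sv \<Rightarrow> sv) \<Rightarrow> bool" where
  "even_der D \<longleftrightarrow> sv_linear D
     \<and> (\<forall>x. sv_even x \<longrightarrow> sv_even (D x)) \<and> (\<forall>x. sv_odd x \<longrightarrow> sv_odd (D x))
     \<and> (\<forall>x y. (sv_even x \<or> sv_odd x) \<longrightarrow> (sv_even y \<or> sv_odd y) \<longrightarrow>
           D (sv_br x y) = sv_add (sv_br (D x) y) (sv_br x (D y)))"

definition odd_der :: "(sv \<Rightarrow> sv) \<Rightarrow> bool" where
  "odd_der D \<longleftrightarrow> sv_linear D
     \<and> (\<forall>x. sv_even x \<longrightarrow> sv_odd (D x)) \<and> (\<forall>x. sv_odd x \<longrightarrow> sv_even (D x))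
     \<and> (\<forall>x y. sv_even x \<longrightarrow> (sv_even y \<or> sv_odd y) \<longrightarrow>
           D (sv_br x y) = sv_add (sv_br (D x) y) (sv_br x (D y)))
     \<and> (\<forall>x y. sv_odd x \<longrightarrow> (sv_even y \<or> sv_odd y) \<longrightarrow>
           D (sv_br x y) = sv_add (sv_br (D x) y) (sv_smul (-1) (sv_br x (D y))))"

definition sv_der :: "(sv \<Rightarrow> sv) \<Rightarrow> bool" where
  "sv_der D \<longleftrightarrow> (\<exists>D0 D1. even_der D0 \<and> odd_der D1 \<and> (\<forall>x\<in>SV. D x = sv_add (D0 x) (D1 x)))"

definition local_der :: "(sv \<Rightarrow> sv) \<Rightarrow> bool" where
  "local_der \<Delta> \<longleftrightarrow> sv_linear \<Delta> \<and> (\<forall>x\<in>SV. \<exists>D. sv_der D \<and> \<Delta> x = D x)"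

end

theory Submission
  imports Defs
begin

text \<open>For every \<open>c \<noteq> 0\<close> the local derivation \<open>\<Delta>\<close> takes the value \<open>\<Delta>(G_m)\<close> on
  \<open>G_m + c G_0\<close>, and there it agrees with a derivation \<open>D_0 + D_1\<close> (even plus odd).
  The derivation identities show that the \<open>L\<close>-part of \<open>D_1(G_m)\<close> is that of \<open>D_1(G_0)\<close>
  shifted by \<open>m\<close>, and that the \<open>G_k\<close>-coefficient of \<open>D_0(G_m)\<close> is \<open>(k - 3m)/(k - m)\<close>
  times the \<open>G_(k-m)\<close>-coefficient of \<open>D_0(G_0)\<close>. So along every residue class \<open>j + m\<int>\<close>
  (for the \<open>G\<close>-part one with \<open>j\<close> not divisible by \<open>m\<close>, so that \<open>k \<noteq> m, 3m\<close>) the coefficients of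
  \<open>\<Delta>(G_m)\<close> satisfy \<open>u_k = w_k a_(k-1) + c a_k\<close>, with nonzero \<open>w\<close> independent of \<open>c\<close> and a
  finitely supported \<open>a\<close> depending on \<open>c\<close>. Weighted suitably, \<open>\<Sum> u_k c^k\<close> telescopes to
  zero; this gives a polynomial in \<open>c\<close>, vanishing for all \<open>c \<noteq> 0\<close>, whose constant term is the
  lowest nonzero \<open>u_k\<close>. Hence \<open>u = 0\<close>.\<close>

lemma delta_support [simp]: "{r. delta n r \<noteq> 0} = {n}"
  by (auto simp: delta_def)

lemma Gb_in_SV [simp]: "Gb n \<in> SV"
  by (simp add: Gb_def SV_def)

lemma Lb_in_SV [simp]: "Lb n \<in> SV"
  by (simp add: Lb_def SV_def)

lemma sv_odd_Gb [simp]: "sv_odd (Gb n)"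
  using Gb_in_SV[of n] by (simp add: sv_odd_def Gb_def)

lemma sv_even_Lb [simp]: "sv_even (Lb n)"
  using Lb_in_SV[of n] by (simp add: sv_even_def Lb_def)

lemma SV_finite_fst: "x \<in> SV \<Longrightarrow> finite {k. fst x k \<noteq> 0}"
  and SV_finite_snd: "x \<in> SV \<Longrightarrow> finite {k. snd x k \<noteq> 0}"
  by (auto simp: SV_def split: prod.splits)

lemma sv_add_in_SV:
  assumes "x \<in> SV" and "y \<in> SV"
  shows "sv_add x y \<in> SV"
proof -
  have "{k. fst x k + fst y k \<noteq> 0} \<subseteq> {k. fst x k \<noteq> 0} \<union> {k. fst y k \<noteq> 0}"
    and "{k. snd x k + snd y k \<noteq> 0} \<subseteq> {k. snd x k \<noteq> 0} \<union> {k. snd y k \<noteq> 0}"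
    by auto
  with SV_finite_fst[OF assms(1)] SV_finite_snd[OF assms(1)]
       SV_finite_fst[OF assms(2)] SV_finite_snd[OF assms(2)] show ?thesis
    by (auto simp: sv_add_def SV_def intro: finite_subset)
qed

lemma sum_support_times_delta:
  assumes "finite {m. a m \<noteq> 0}"
  shows "(\<Sum>m\<in>{m. a m \<noteq> 0}. a m * delta n (k - m) * h m) = a (k - n) * h (k - n)"
proof -
  have "(\<Sum>m\<in>{m. a m \<noteq> 0}. a m * delta n (k - m) * h m)
      = (\<Sum>m\<in>{m. a m \<noteq> 0}. if m = k - n then a m * h m else 0)"
    by (rule sum.cong) (auto simp: delta_def)
  also have "\<dots> = a (k - n) * h (k - n)"
    using assms by (simp add: sum.delta)
  finally show ?thesis .
qed

lemma sv_br_Gb_right: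
  assumes "x \<in> SV"
  shows "sv_br x (Gb n) = ((\<lambda>k. 2 * snd x (k - n)),
           (\<lambda>k. fst x (k - n) * (of_int (k - n) / 2 - of_int n)))"
proof -
  obtain a b where x: "x = (a, b)" by fastforce
  have fa: "finite {m. a m \<noteq> 0}" and fb: "finite {m. b m \<noteq> 0}"
    using assms x by (auto simp: SV_def)
  have "(\<Sum>r\<in>{r. b r \<noteq> 0}. b r * delta n (k - r) * 2) = 2 * b (k - n)" for k
    using sum_support_times_delta[OF fb, of n k "\<lambda>_. 2"] by simp
  moreover have "(\<Sum>m\<in>{m. a m \<noteq> 0}. a m * delta n (k - m) * (of_int m / 2 - of_int (k - m)))
     = a (k - n) * (of_int (k - n) / 2 - of_int n)" for k
    using sum_support_times_delta[OF fa, of n k "\<lambda>m. of_int m / 2 - of_int (k - m)"] by simp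
  ultimately show ?thesis
    unfolding x sv_br_def Gb_def by simp
qed

lemma sv_br_Lb_right:
  assumes "x \<in> SV"
  shows "sv_br x (Lb n) = ((\<lambda>k. fst x (k - n) * of_int ((k - n) - n)),
           (\<lambda>k. - (snd x (k - n) * (of_int n / 2 - of_int (k - n)))))"
proof -
  obtain a b where x: "x = (a, b)" by fastforce
  have fa: "finite {m. a m \<noteq> 0}" and fb: "finite {m. b m \<noteq> 0}"
    using assms x by (auto simp: SV_def)
  have "(\<Sum>m\<in>{m. a m \<noteq> 0}. a m * delta n (k - m) * of_int (m - (k - m)))
     = a (k - n) * of_int ((k - n) - n)" for k
    using sum_support_times_delta[OF fa, of n k "\<lambda>m. of_int (m - (k - m))"] by simp
  moreover have "(\<Sum>r\<in>{r. b r \<noteq> 0}. b r * delta n (k - r) * (of_int (k - r) / 2 - of_int r))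
     = b (k - n) * (of_int n / 2 - of_int (k - n))" for k
    using sum_support_times_delta[OF fb, of n k "\<lambda>r. of_int (k - r) / 2 - of_int r"] by simp
  ultimately show ?thesis
    unfolding x sv_br_def Lb_def by simp
qed

lemma sv_br_Gb_left:
  "sv_br (Gb n) x = ((\<lambda>k. 2 * snd x (k - n)),
           (\<lambda>k. - (fst x (k - n) * (of_int (k - n) / 2 - of_int n))))"
  unfolding sv_br_def Gb_def by (auto simp: delta_def)

lemma sv_br_Lb_left:
  "sv_br (Lb n) x = ((\<lambda>k. fst x (k - n) * of_int (n - (k - n))),
           (\<lambda>k. snd x (k - n) * (of_int n / 2 - of_int (k - n))))"
  unfolding sv_br_def Lb_def by (auto simp: delta_def)

lemma sv_br_Gb_Gb: "sv_br (Gb r) (Gb s) = sv_smul 2 (Lb (r + s))"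
  unfolding sv_br_Gb_left by (auto simp: sv_smul_def Lb_def Gb_def delta_def)

lemma sv_br_Lb_Gb: "sv_br (Lb j) (Gb k) = sv_smul (of_int j / 2 - of_int k) (Gb (j + k))"
  unfolding sv_br_Lb_left by (auto simp: sv_smul_def Gb_def delta_def)


lemma sv_linear_in_SV: "sv_linear D \<Longrightarrow> x \<in> SV \<Longrightarrow> D x \<in> SV"
  by (simp add: sv_linear_def)

lemma sv_linear_add: "sv_linear D \<Longrightarrow> x \<in> SV \<Longrightarrow> y \<in> SV \<Longrightarrow> D (sv_add x y) = sv_add (D x) (D y)"
  by (simp add: sv_linear_def)

lemma sv_linear_smul: "sv_linear D \<Longrightarrow> x \<in> SV \<Longrightarrow> D (sv_smul c x) = sv_smul c (D x)"
  by (simp add: sv_linear_def)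

lemma even_der_linear: "even_der D \<Longrightarrow> sv_linear D"
  by (simp add: even_der_def)

lemma odd_der_linear: "odd_der D \<Longrightarrow> sv_linear D"
  by (simp add: odd_der_def)

lemma even_der_fst_Gb: "even_der D \<Longrightarrow> fst (D (Gb n)) = (\<lambda>_. 0)"
  unfolding even_der_def using sv_odd_Gb by (metis sv_odd_def)

lemma odd_der_snd_Gb: "odd_der D \<Longrightarrow> snd (D (Gb n)) = (\<lambda>_. 0)"
  unfolding odd_der_def using sv_odd_Gb by (metis sv_even_def)

lemma even_der_br:
  "even_der D \<Longrightarrow> sv_even x \<or> sv_odd x \<Longrightarrow> sv_even y \<or> sv_odd y \<Longrightarrow>
   D (sv_br x y) = sv_add (sv_br (D x) y) (sv_br x (D y))"
  unfolding even_der_def by blast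

lemma odd_der_br_even:
  "odd_der D \<Longrightarrow> sv_even x \<Longrightarrow> sv_even y \<or> sv_odd y \<Longrightarrow>
   D (sv_br x y) = sv_add (sv_br (D x) y) (sv_br x (D y))"
  unfolding odd_der_def by blast

lemma odd_der_br_odd:
  "odd_der D \<Longrightarrow> sv_odd x \<Longrightarrow> sv_even y \<or> sv_odd y \<Longrightarrow>
   D (sv_br x y) = sv_add (sv_br (D x) y) (sv_smul (-1) (sv_br x (D y)))"
  unfolding odd_der_def by blast

text \<open>Apply \<open>D\<close> to \<open>[G_0, G_0] = 2 L_0\<close> to express \<open>D(L_0)\<close> through \<open>D(G_0)\<close>, then to
  \<open>[L_0, G_m] = -m G_m\<close>.\<close>
lemma even_der_snd_Gb:
  assumes D: "even_der D"
  shows "(of_int k - of_int m) * snd (D (Gb m)) k = (of_int k - 3 * of_int m) * snd (D (Gb 0)) (k - m)"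
proof -
  have lin: "sv_linear D" using D by (rule even_der_linear)
  define p where "p = D (Gb 0)"
  have "p \<in> SV" unfolding p_def using lin by (simp add: sv_linear_in_SV)
  have "D (sv_br (Gb 0) (Gb 0)) = sv_add (sv_br p (Gb 0)) (sv_br (Gb 0) p)"
    unfolding p_def using D by (simp add: even_der_br)
  hence L0: "sv_smul 2 (D (Lb 0)) = sv_add (sv_br p (Gb 0)) (sv_br (Gb 0) p)"
    by (simp add: sv_br_Gb_Gb sv_linear_smul[OF lin])
  have L0_fst: "fst (D (Lb 0)) i = 2 * snd p i" for i
    using arg_cong[OF L0, of "\<lambda>x. fst x i"]
    by (simp add: sv_smul_def sv_add_def sv_br_Gb_right[OF \<open>p \<in> SV\<close>] sv_br_Gb_left)
  have "D (sv_br (Lb 0) (Gb m)) = sv_add (sv_br (D (Lb 0)) (Gb m)) (sv_br (Lb 0) (D (Gb m)))"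
    using D by (simp add: even_der_br)
  hence "sv_smul (- of_int m) (D (Gb m)) = sv_add (sv_br (D (Lb 0)) (Gb m)) (sv_br (Lb 0) (D (Gb m)))"
    by (simp add: sv_br_Lb_Gb sv_linear_smul[OF lin])
  from arg_cong[OF this, of "\<lambda>x. snd x k"]
  have "- of_int m * snd (D (Gb m)) k = 2 * snd p (k - m) * (of_int (k - m) / 2 - of_int m)
          + snd (D (Gb m)) k * (- of_int k)"
    using lin by (simp add: sv_smul_def sv_add_def sv_br_Gb_right sv_linear_in_SV sv_br_Lb_left L0_fst)
  thus ?thesis unfolding p_def by (simp add: of_int_diff field_simps) algebra
qed

lemma odd_der_fst_Gb_off_diagonal:
  assumes D: "odd_der D"
  shows "(of_int k - of_int m) * fst (D (Gb m)) k = (of_int k - of_int m) * fst (D (Gb 0)) (k - m)"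
proof -
  have lin: "sv_linear D" using D by (rule odd_der_linear)
  define q where "q = D (Gb 0)"
  have "q \<in> SV" unfolding q_def using lin by (simp add: sv_linear_in_SV)
  have "D (sv_br (Gb 0) (Gb 0)) = sv_add (sv_br q (Gb 0)) (sv_smul (-1) (sv_br (Gb 0) q))"
    unfolding q_def using D by (simp add: odd_der_br_odd)
  hence L0: "sv_smul 2 (D (Lb 0)) = sv_add (sv_br q (Gb 0)) (sv_smul (-1) (sv_br (Gb 0) q))"
    by (simp add: sv_br_Gb_Gb sv_linear_smul[OF lin])
  have L0_snd: "snd (D (Lb 0)) i = fst q i * of_int i / 2" for i
    using arg_cong[OF L0, of "\<lambda>x. snd x i"]
    by (simp add: sv_smul_def sv_add_def sv_br_Gb_right[OF \<open>q \<in> SV\<close>] sv_br_Gb_left algebra_simps)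
  have "D (sv_br (Lb 0) (Gb m)) = sv_add (sv_br (D (Lb 0)) (Gb m)) (sv_br (Lb 0) (D (Gb m)))"
    using D by (simp add: odd_der_br_even)
  hence "sv_smul (- of_int m) (D (Gb m)) = sv_add (sv_br (D (Lb 0)) (Gb m)) (sv_br (Lb 0) (D (Gb m)))"
    by (simp add: sv_br_Lb_Gb sv_linear_smul[OF lin])
  from arg_cong[OF this, of "\<lambda>x. fst x k"]
  have "- of_int m * fst (D (Gb m)) k = 2 * (fst q (k - m) * of_int (k - m) / 2)
          + fst (D (Gb m)) k * (- of_int k)"
    using lin by (simp add: sv_smul_def sv_add_def sv_br_Gb_right sv_linear_in_SV sv_br_Lb_left L0_snd)
  thus ?thesis unfolding q_def by (simp add: of_int_diff field_simps) algebra
qed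

lemma odd_der_Lb_Gb_diagonal:
  assumes D: "odd_der D"
  shows "(of_int j / 2 - of_int k) * fst (D (Gb (j + k))) (j + k)
     = 2 * snd (D (Lb j)) j + of_int (j - k) * fst (D (Gb k)) k"
proof -
  have lin: "sv_linear D" using D by (rule odd_der_linear)
  have "D (sv_br (Lb j) (Gb k)) = sv_add (sv_br (D (Lb j)) (Gb k)) (sv_br (Lb j) (D (Gb k)))"
    using D by (simp add: odd_der_br_even)
  hence "sv_smul (of_int j / 2 - of_int k) (D (Gb (j + k)))
      = sv_add (sv_br (D (Lb j)) (Gb k)) (sv_br (Lb j) (D (Gb k)))"
    by (simp add: sv_br_Lb_Gb sv_linear_smul[OF lin])
  from arg_cong[OF this, of "\<lambda>x. fst x (j + k)"] show ?thesis
    using lin by (simp add: sv_smul_def sv_add_def sv_br_Gb_right sv_linear_in_SV sv_br_Lb_left algebra_simps)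
qed

lemma odd_der_Gb_Gb_diagonal:
  assumes D: "odd_der D"
  shows "2 * snd (D (Lb (r + s))) (r + s)
     = fst (D (Gb r)) r * (of_int r / 2 - of_int s) + fst (D (Gb s)) s * (of_int s / 2 - of_int r)"
proof -
  have lin: "sv_linear D" using D by (rule odd_der_linear)
  have "D (sv_br (Gb r) (Gb s)) = sv_add (sv_br (D (Gb r)) (Gb s)) (sv_smul (-1) (sv_br (Gb r) (D (Gb s))))"
    using D by (simp add: odd_der_br_odd)
  hence "sv_smul 2 (D (Lb (r + s)))
      = sv_add (sv_br (D (Gb r)) (Gb s)) (sv_smul (-1) (sv_br (Gb r) (D (Gb s))))"
    by (simp add: sv_br_Gb_Gb sv_linear_smul[OF lin])
  from arg_cong[OF this, of "\<lambda>x. snd x (r + s)"] show ?thesis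
    using lin by (simp add: sv_smul_def sv_add_def sv_br_Gb_right sv_linear_in_SV sv_br_Gb_left algebra_simps)
qed

text \<open>At \<open>k = m\<close> the off-diagonal identity is vacuous; instead eliminate the unknowns
  \<open>F(-m), F(-2m), g(-m), g(-2m)\<close> from five instances of the two diagonal identities.\<close>
lemma odd_der_fst_Gb_diagonal:
  assumes D: "odd_der D" and m: "m \<noteq> 0"
  shows "fst (D (Gb m)) m = fst (D (Gb 0)) 0"
proof -
  define F where "F n = fst (D (Gb n)) n" for n
  define g where "g n = snd (D (Lb n)) n" for n
  define M where "M = (of_int m :: complex)"
  have "M \<noteq> 0" using m by (simp add: M_def)
  have "2 * g (-m) = F 0 * M - F (-m) * M / 2"
    using odd_der_Gb_Gb_diagonal[OF D, of 0 "-m"] by (simp add: F_def g_def M_def algebra_simps)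
  moreover have "M / 2 * F (-2*m) = 2 * g (-m)"
    using odd_der_Lb_Gb_diagonal[OF D, of "-m" "-m"] by (simp add: F_def g_def M_def algebra_simps)
  moreover have "- (3 * M / 2) * F 0 = 2 * g (-m) - 2 * M * F m"
    using odd_der_Lb_Gb_diagonal[OF D, of "-m" "m"] by (simp add: F_def g_def M_def algebra_simps)
  moreover have "2 * g (-2*m) = 2 * M * F 0 - M * F (-2*m)"
    using odd_der_Gb_Gb_diagonal[OF D, of 0 "-2*m"] by (simp add: F_def g_def M_def algebra_simps)
  moreover have "- 2 * M * F (-m) = 2 * g (-2*m) - 3 * M * F m"
    using odd_der_Lb_Gb_diagonal[OF D, of "-2*m" "m"] by (simp add: F_def g_def M_def algebra_simps)
  ultimately have "M * (F m - F 0) = 0"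
    by algebra
  thus ?thesis using \<open>M \<noteq> 0\<close> by (simp add: F_def)
qed

lemma odd_der_fst_Gb_shift:
  assumes D: "odd_der D" and m: "m \<noteq> 0"
  shows "fst (D (Gb m)) i = fst (D (Gb 0)) (i - m)"
proof (cases "i = m")
  case True
  thus ?thesis using odd_der_fst_Gb_diagonal[OF D m] by simp
next
  case False
  hence "(of_int i - of_int m :: complex) \<noteq> 0" by simp
  thus ?thesis using odd_der_fst_Gb_off_diagonal[OF D, of i m] by simp
qed


lemma finite_support_recurrence_vanishes_below:
  fixes a r :: "int \<Rightarrow> 'a::mult_zero"
  assumes fin: "finite {k. a k \<noteq> 0}" and rec: "\<And>k. k < i \<Longrightarrow> a k = r k * a (k - 1)"
    and "k < i"
  shows "a k = 0"
proof (rule ccontr)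
  assume "a k \<noteq> 0"
  define B where "B = {k. k < i \<and> a k \<noteq> 0}"
  have "finite B" using fin by (rule rev_finite_subset) (auto simp: B_def)
  moreover have "k \<in> B" using \<open>a k \<noteq> 0\<close> \<open>k < i\<close> by (simp add: B_def)
  ultimately have "Min B \<in> B" and "\<And>l. l \<in> B \<Longrightarrow> Min B \<le> l"
    by (metis Min_in empty_iff, simp)
  hence "Min B - 1 \<notin> B" by fastforce
  hence "a (Min B - 1) = 0" using \<open>Min B \<in> B\<close> by (simp add: B_def)
  with rec[of "Min B"] \<open>Min B \<in> B\<close> show False by (simp add: B_def)
qed

lemma finite_support_recurrence_vanishes_above:
  fixes a r :: "int \<Rightarrow> 'a::mult_zero"
  assumes fin: "finite {k. a k \<noteq> 0}" and rec: "\<And>k. T < k \<Longrightarrow> a (k - 1) = r k * a k"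
    and "T \<le> k"
  shows "a k = 0"
proof -
  have "{k. a (- k) \<noteq> 0} = uminus ` {k. a k \<noteq> 0}"
    by (auto intro: image_eqI[of _ _ "- _"])
  hence "finite {k. a (- k) \<noteq> 0}" using fin by simp
  moreover have "a (- j) = r (1 - j) * a (- (j - 1))" if "j < 1 - T" for j
    using rec[of "1 - j"] that by simp
  moreover have "- k < 1 - T" using \<open>T \<le> k\<close> by linarith
  ultimately have "a (- (- k)) = 0"
    by (rule finite_support_recurrence_vanishes_below)
  thus ?thesis by simp
qed

text \<open>Weights with \<open>K_t W_t = -K_(t-1)\<close>, which make \<open>\<Sum> K_t (W_t A_(t-1) + c A_t) c^t\<close> telescope.\<close>
fun recurrence_weight :: "(nat \<Rightarrow> complex) \<Rightarrow> nat \<Rightarrow> complex" where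
  "recurrence_weight W 0 = 1"
| "recurrence_weight W (Suc t) = - recurrence_weight W t / W (Suc t)"

lemma recurrence_weight_sum_telescopes:
  assumes W: "\<And>t. W (Suc t) \<noteq> 0"
    and U0: "U 0 = c * A 0" and U: "\<And>t. U (Suc t) = W (Suc t) * A t + c * A (Suc t)"
  shows "(\<Sum>t\<le>n. recurrence_weight W t * U t * c ^ t) = recurrence_weight W n * c ^ Suc n * A n"
proof (induction n)
  case 0
  show ?case using U0 by simp
next
  case (Suc n)
  have "(\<Sum>t\<le>Suc n. recurrence_weight W t * U t * c ^ t)
      = recurrence_weight W n * c ^ Suc n * A n
        + recurrence_weight W (Suc n) * (W (Suc n) * A n + c * A (Suc n)) * c ^ Suc n"
    using Suc U by simp
  also have "\<dots> = recurrence_weight W (Suc n) * c ^ Suc (Suc n) * A (Suc n)"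
    using W[of n] by (simp add: field_simps)
  finally show ?case .
qed

lemma polyfun_vanishing_off_zero:
  fixes c :: "nat \<Rightarrow> 'a::{idom,real_normed_div_algebra}"
  assumes "\<And>z. z \<noteq> 0 \<Longrightarrow> (\<Sum>i\<le>n. c i * z ^ i) = 0" and "i \<le> n"
  shows "c i = 0"
proof (rule ccontr)
  assume "c i \<noteq> 0"
  hence "finite {z. (\<Sum>i\<le>n. c i * z ^ i) = 0}"
    using \<open>i \<le> n\<close> by (rule polyfun_roots_finite)
  moreover have "UNIV - {0} \<subseteq> {z. (\<Sum>i\<le>n. c i * z ^ i) = 0}"
    using assms(1) by blast
  ultimately have "finite (UNIV :: 'a set)"
    by (metis finite_Diff2 finite.emptyI finite.insertI finite_subset)
  thus False using infinite_UNIV_char_0 by blast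
qed

lemma twisted_recurrence_forces_zero:
  fixes u w :: "int \<Rightarrow> complex"
  assumes fin_u: "finite {k. u k \<noteq> 0}" and w: "\<And>k. w k \<noteq> 0"
    and rec: "\<And>c. c \<noteq> 0 \<Longrightarrow> \<exists>a. finite {k. a k \<noteq> 0} \<and> (\<forall>k. u k = w k * a (k - 1) + c * a k)"
  shows "u k = 0"
proof (rule ccontr)
  assume "u k \<noteq> 0"
  define S where "S = {k. u k \<noteq> 0}"
  have "finite S" and "S \<noteq> {}" using fin_u \<open>u k \<noteq> 0\<close> by (auto simp: S_def)
  define i where "i = Min S"
  define T where "T = Max S"
  have "i \<in> S" and "T \<in> S"
    using \<open>finite S\<close> \<open>S \<noteq> {}\<close> by (simp_all add: i_def T_def)
  hence "u i \<noteq> 0" and "i \<le> T"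
    using \<open>finite S\<close> by (simp_all add: S_def i_def)
  have below: "u k = 0" if "k < i" for k
    using Min_le[OF \<open>finite S\<close>, of k] that unfolding S_def i_def by force
  have above: "u k = 0" if "T < k" for k
    using Max_ge[OF \<open>finite S\<close>, of k] that unfolding S_def T_def by force
  define N where "N = nat (T - i)"
  define K where "K = recurrence_weight (\<lambda>t. w (i + int t))"
  have "(\<Sum>t\<le>N. K t * u (i + int t) * c ^ t) = 0" if "c \<noteq> 0" for c
  proof -
    obtain a where fin_a: "finite {k. a k \<noteq> 0}" and a: "\<And>k. u k = w k * a (k - 1) + c * a k"
      using rec[OF \<open>c \<noteq> 0\<close>] by blast
    have a_below: "a k = 0" if "k < i" for k
    proof (rule finite_support_recurrence_vanishes_below[OF fin_a _ that])
      show "a k = - w k / c * a (k - 1)" if "k < i" for k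
        using a[of k] below[OF that] \<open>c \<noteq> 0\<close> by (simp add: field_simps eq_neg_iff_add_eq_0)
    qed
    have a_above: "a k = 0" if "T \<le> k" for k
    proof (rule finite_support_recurrence_vanishes_above[OF fin_a _ that])
      show "a (k - 1) = - c / w k * a k" if "T < k" for k
        using a[of k] above[OF that] w[of k] by (simp add: field_simps eq_neg_iff_add_eq_0)
    qed
    have "(\<Sum>t\<le>N. K t * u (i + int t) * c ^ t) = K N * c ^ Suc N * a (i + int N)"
      unfolding K_def
    proof (rule recurrence_weight_sum_telescopes)
      show "u (i + int 0) = c * a (i + int 0)"
        using a[of i] a_below[of "i - 1"] by simp
      show "u (i + int (Suc t)) = w (i + int (Suc t)) * a (i + int t) + c * a (i + int (Suc t))" for t
        using a[of "i + int (Suc t)"] by simp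
    qed (rule w)
    also have "a (i + int N) = 0"
      using a_above \<open>i \<le> T\<close> by (simp add: N_def)
    finally show ?thesis by simp
  qed
  hence "K 0 * u (i + int 0) = 0"
    by (rule polyfun_vanishing_off_zero[where c = "\<lambda>t. K t * u (i + int t)"]) simp_all
  with \<open>u i \<noteq> 0\<close> show False by (simp add: K_def)
qed

lemma finite_support_progression:
  assumes "finite {i. f i \<noteq> 0}" and "m \<noteq> (0::int)"
  shows "finite {k. f (j + k * m) \<noteq> 0}"
proof -
  have "inj (\<lambda>k. j + k * m)" using assms(2) by (auto simp: inj_def)
  hence "finite ((\<lambda>k. j + k * m) -` {i. f i \<noteq> 0})"
    using assms(1) by (rule finite_vimageI[rotated])
  thus ?thesis by (simp add: vimage_def)
qed


text \<open>\<open>\<Delta>\<close> maps \<open>G_m + c G_0\<close> to \<open>\<Delta>(G_m)\<close> and agrees there with some derivation.\<close>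
lemma local_der_Gb_eq_derivation_sum:
  assumes loc: "local_der \<Delta>" and \<Delta>0: "\<Delta> (Gb 0) = sv_zero"
  obtains D0 D1 where "even_der D0" and "odd_der D1"
    and "\<And>k. fst (\<Delta> (Gb m)) k = fst (D1 (Gb m)) k + c * fst (D1 (Gb 0)) k"
    and "\<And>k. snd (\<Delta> (Gb m)) k = snd (D0 (Gb m)) k + c * snd (D0 (Gb 0)) k"
proof -
  have lin: "sv_linear \<Delta>" using loc by (simp add: local_der_def)
  define x where "x = sv_add (Gb m) (sv_smul c (Gb 0))"
  have "sv_smul c (Gb 0) \<in> SV" by (simp add: sv_smul_def SV_def Gb_def delta_def)
  hence "x \<in> SV" unfolding x_def by (simp add: sv_add_in_SV)
  have "\<Delta> x = sv_add (\<Delta> (Gb m)) (sv_smul c sv_zero)"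
    unfolding x_def using lin \<open>sv_smul c (Gb 0) \<in> SV\<close> by (simp add: sv_linear_add sv_linear_smul \<Delta>0)
  hence \<Delta>x: "\<Delta> x = \<Delta> (Gb m)" by (simp add: sv_add_def sv_smul_def sv_zero_def)
  obtain D where "sv_der D" and "\<Delta> x = D x" using loc \<open>x \<in> SV\<close> by (auto simp: local_der_def)
  then obtain D0 D1 where D0: "even_der D0" and D1: "odd_der D1"
    and "\<forall>y\<in>SV. D y = sv_add (D0 y) (D1 y)"
    by (auto simp: sv_der_def)
  with \<Delta>x \<open>\<Delta> x = D x\<close> \<open>x \<in> SV\<close> have "\<Delta> (Gb m)
      = sv_add (sv_add (D0 (Gb m)) (sv_smul c (D0 (Gb 0)))) (sv_add (D1 (Gb m)) (sv_smul c (D1 (Gb 0))))"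
    using even_der_linear[OF D0] odd_der_linear[OF D1] \<open>sv_smul c (Gb 0) \<in> SV\<close>
    unfolding x_def by (simp add: sv_linear_add sv_linear_smul)
  with even_der_fst_Gb[OF D0] odd_der_snd_Gb[OF D1] show ?thesis
    by (intro that[OF D0 D1]) (simp_all add: sv_add_def sv_smul_def)
qed

lemma local_der_fst_Gb:
  assumes loc: "local_der \<Delta>" and \<Delta>0: "\<Delta> (Gb 0) = sv_zero" and "m \<noteq> 0"
  shows "fst (\<Delta> (Gb m)) j = 0"
proof -
  have "\<Delta> (Gb m) \<in> SV" using loc by (simp add: local_der_def sv_linear_in_SV)
  have "fst (\<Delta> (Gb m)) (j + 0 * m) = 0"
  proof (rule twisted_recurrence_forces_zero[where u = "\<lambda>k. fst (\<Delta> (Gb m)) (j + k * m)" and w = "\<lambda>_. 1"])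
    show "finite {k. fst (\<Delta> (Gb m)) (j + k * m) \<noteq> 0}"
      using finite_support_progression[OF SV_finite_fst[OF \<open>\<Delta> (Gb m) \<in> SV\<close>] \<open>m \<noteq> 0\<close>] .
    fix c :: complex
    obtain D0 D1 where D1: "odd_der D1"
      and \<Delta>m: "\<And>k. fst (\<Delta> (Gb m)) k = fst (D1 (Gb m)) k + c * fst (D1 (Gb 0)) k"
      using local_der_Gb_eq_derivation_sum[OF loc \<Delta>0] by blast
    have "D1 (Gb 0) \<in> SV" using odd_der_linear[OF D1] by (simp add: sv_linear_in_SV)
    have shift: "j + (k - 1) * m = j + k * m - m" for k by (simp add: algebra_simps)
    have "fst (\<Delta> (Gb m)) (j + k * m)
        = 1 * fst (D1 (Gb 0)) (j + (k - 1) * m) + c * fst (D1 (Gb 0)) (j + k * m)" for k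
      unfolding shift using \<Delta>m odd_der_fst_Gb_shift[OF D1 \<open>m \<noteq> 0\<close>] by simp
    with finite_support_progression[OF SV_finite_fst[OF \<open>D1 (Gb 0) \<in> SV\<close>] \<open>m \<noteq> 0\<close>]
    show "\<exists>a. finite {k. a k \<noteq> 0} \<and>
        (\<forall>k. fst (\<Delta> (Gb m)) (j + k * m) = 1 * a (k - 1) + c * a k)"
      by (intro exI[of _ "\<lambda>k. fst (D1 (Gb 0)) (j + k * m)"]) simp
  qed simp
  thus ?thesis by simp
qed

lemma local_der_snd_Gb:
  assumes loc: "local_der \<Delta>" and \<Delta>0: "\<Delta> (Gb 0) = sv_zero" and "m \<noteq> 0" and "\<not> m dvd j"
  shows "snd (\<Delta> (Gb m)) j = 0"
proof -
  have "\<Delta> (Gb m) \<in> SV" using loc by (simp add: local_der_def sv_linear_in_SV)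
  have off_progression: "j + k * m - l * m \<noteq> 0" for k l
  proof
    assume "j + k * m - l * m = 0"
    hence "j = m * (l - k)" by (simp add: algebra_simps)
    thus False using \<open>\<not> m dvd j\<close> by simp
  qed
  define w where "w k = (of_int (j + k * m - 3 * m) / of_int (j + k * m - m) :: complex)" for k
  have "snd (\<Delta> (Gb m)) (j + 0 * m) = 0"
  proof (rule twisted_recurrence_forces_zero[where u = "\<lambda>k. snd (\<Delta> (Gb m)) (j + k * m)" and w = w])
    show "finite {k. snd (\<Delta> (Gb m)) (j + k * m) \<noteq> 0}"
      using finite_support_progression[OF SV_finite_snd[OF \<open>\<Delta> (Gb m) \<in> SV\<close>] \<open>m \<noteq> 0\<close>] .
    show "w k \<noteq> 0" for k
      using off_progression[of k 3] off_progression[of k 1] unfolding w_def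
      by (simp only: divide_eq_0_iff of_int_eq_0_iff) simp
    fix c :: complex
    obtain D0 D1 where D0: "even_der D0"
      and \<Delta>m: "\<And>k. snd (\<Delta> (Gb m)) k = snd (D0 (Gb m)) k + c * snd (D0 (Gb 0)) k"
      using local_der_Gb_eq_derivation_sum[OF loc \<Delta>0] by blast
    have "D0 (Gb 0) \<in> SV" using even_der_linear[OF D0] by (simp add: sv_linear_in_SV)
    have "snd (D0 (Gb m)) (j + k * m) = w k * snd (D0 (Gb 0)) (j + (k - 1) * m)" for k
    proof -
      have "(of_int (j + k * m) - of_int m :: complex) \<noteq> 0"
        using off_progression[of k 1] by (metis mult_1 of_int_diff of_int_eq_0_iff)
      moreover have "j + (k - 1) * m = j + k * m - m" by (simp add: algebra_simps)
      ultimately show ?thesis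
        using even_der_snd_Gb[OF D0, of "j + k * m" m] by (simp add: w_def field_simps of_int_diff)
    qed
    with \<Delta>m finite_support_progression[OF SV_finite_snd[OF \<open>D0 (Gb 0) \<in> SV\<close>] \<open>m \<noteq> 0\<close>]
    show "\<exists>a. finite {k. a k \<noteq> 0} \<and>
        (\<forall>k. snd (\<Delta> (Gb m)) (j + k * m) = w k * a (k - 1) + c * a k)"
      by (intro exI[of _ "\<lambda>k. snd (D0 (Gb 0)) (j + k * m)"]) simp
  qed
  thus ?thesis by simp
qed

theorem lemma3p4:
  fixes \<Delta> :: "sv \<Rightarrow> sv" and m :: int
  assumes "local_der \<Delta>" and "\<Delta> (Gb 0) = sv_zero" and "m \<noteq> 0"
  shows "fst (\<Delta> (Gb m)) = (\<lambda>_. 0) \<and> (\<forall>n. snd (\<Delta> (Gb m)) n \<noteq> 0 \<longrightarrow> m dvd n)"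
  using local_der_fst_Gb[OF assms] local_der_snd_Gb[OF assms] by auto

end
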